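(* Let $G$ be an abelian group. A function $\phi:G\to\mathbb{H}$ is an extreme point of $\mathcal{P}^{\mathbb{H}}_*(G)$ if and only if $\phi$ is a group homomorphism from $G$ to $\mathbb{S}$. In other words, the extreme boundary of $\mathcal{P}^{\mathbb{H}}_*(G)$ equals the quaternionic dual $G^\delta=\mathrm{Hom}(G,\mathbb{S})$.
   Context: $\mathbb{H}$ is the real quaternion algebra and $\mathbb{S}=\{q\in\mathbb{H}:|q|=1\}$ is the (nonabelian) multiplicative group of unit quaternions. For an abelian group $G$, $\phi:G\to\mathbb{H}$ is positive definite if for all $k$, $g_1,\dots,g_k\in G$, $q_1,\dots,q_k\in\mathbb{H}$, $\sum_{i,j=1}^k\overline{q_i}\,\phi(g_j-g_i)\,q_j$ is a nonnegative real number. $\mathcal{P}^{\mathbb{H}}_*(G)$ is the convex set of positive definite $\phi:G\to\mathbb{H}$ with $\phi(0)=1$. The quaternionic dual $G^\delta$ is the set of all group homomorphisms $G\to\mathbb{S}$ (quaternionic characters). *)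

theory Defs
  imports "HOL-Analysis.Analysis" "HOL-Library.Function_Algebras"
begin

codatatype quat = Quat (qRe: real) (qI: real) (qJ: real) (qK: real)

lemma quat_eqI [intro?]:
  "qRe x = qRe y \<Longrightarrow> qI x = qI y \<Longrightarrow> qJ x = qJ y \<Longrightarrow> qK x = qK y \<Longrightarrow> x = y"
  by (rule quat.expand) simp

lemma quat_eq_iff: "x = y \<longleftrightarrow> qRe x = qRe y \<and> qI x = qI y \<and> qJ x = qJ y \<and> qK x = qK y"
  by (auto intro: quat.expand)

instantiation quat :: real_algebra_1
begin

primcorec zero_quat where
  "qRe 0 = 0" | "qI 0 = 0" | "qJ 0 = 0" | "qK 0 = 0"

primcorec plus_quat where
  "qRe (x + y) = qRe x + qRe y" | "qI (x + y) = qI x + qI y"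
| "qJ (x + y) = qJ x + qJ y" | "qK (x + y) = qK x + qK y"

primcorec uminus_quat where
  "qRe (- x) = - qRe x" | "qI (- x) = - qI x" | "qJ (- x) = - qJ x" | "qK (- x) = - qK x"

primcorec minus_quat where
  "qRe (x - y) = qRe x - qRe y" | "qI (x - y) = qI x - qI y"
| "qJ (x - y) = qJ x - qJ y" | "qK (x - y) = qK x - qK y"

primcorec scaleR_quat where
  "qRe (scaleR r x) = r * qRe x" | "qI (scaleR r x) = r * qI x"
| "qJ (scaleR r x) = r * qJ x" | "qK (scaleR r x) = r * qK x"

primcorec one_quat where
  "qRe 1 = 1" | "qI 1 = 0" | "qJ 1 = 0" | "qK 1 = 0"

primcorec times_quat where
  "qRe (a * b) = qRe a * qRe b - qI a * qI b - qJ a * qJ b - qK a * qK b"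
| "qI (a * b) = qRe a * qI b + qI a * qRe b + qJ a * qK b - qK a * qJ b"
| "qJ (a * b) = qRe a * qJ b - qI a * qK b + qJ a * qRe b + qK a * qI b"
| "qK (a * b) = qRe a * qK b + qI a * qJ b - qJ a * qI b + qK a * qRe b"

instance
  by standard (auto simp: quat_eq_iff algebra_simps)

end

text \<open>Pointwise real vector space structure on functions (needed to speak of
  convex combinations and extreme points of sets of functions).\<close>

instantiation "fun" :: (type, real_vector) real_vector
begin
definition scaleR_fun :: "real \<Rightarrow> ('a \<Rightarrow> 'b) \<Rightarrow> 'a \<Rightarrow> 'b" where
  "scaleR_fun r f = (\<lambda>x. r *\<^sub>R f x)"
instance
  by standard (auto simp: scaleR_fun_def fun_eq_iff scaleR_add_right scaleR_add_left)
end

primcorec qcnj :: "quat \<Rightarrow> quat" where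
  "qRe (qcnj q) = qRe q" | "qI (qcnj q) = - qI q" | "qJ (qcnj q) = - qJ q" | "qK (qcnj q) = - qK q"

definition qnorm :: "quat \<Rightarrow> real" where
  "qnorm q = sqrt ((qRe q)\<^sup>2 + (qI q)\<^sup>2 + (qJ q)\<^sup>2 + (qK q)\<^sup>2)"

definition unit_quats :: "quat set" where
  "unit_quats = {q. qnorm q = 1}"

definition quat_pos_def :: "('g::ab_group_add \<Rightarrow> quat) \<Rightarrow> bool" where
  "quat_pos_def \<phi> \<longleftrightarrow>
     (\<forall>(k::nat) (g::nat \<Rightarrow> 'g) (q::nat \<Rightarrow> quat).
        \<exists>r::real. r \<ge> 0 \<and>
          (\<Sum>i<k. \<Sum>j<k. qcnj (q i) * \<phi> (g j - g i) * q j) = of_real r)"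

definition quat_pos_def_normalized :: "('g::ab_group_add \<Rightarrow> quat) set" where
  "quat_pos_def_normalized = {\<phi>. quat_pos_def \<phi> \<and> \<phi> 0 = 1}"

definition quat_dual :: "('g::ab_group_add \<Rightarrow> quat) set" where
  "quat_dual = {\<phi>. (\<forall>x. \<phi> x \<in> unit_quats) \<and> (\<forall>x y. \<phi> (x + y) = \<phi> x * \<phi> y)}"

end

theory Submission
  imports Defs
begin

text \<open>A character \<open>\<phi>\<close> is positive definite because its hermitian form is
  \<open>|\<Sum>\<^sub>j \<phi>(g\<^sub>j) q\<^sub>j|\<^sup>2\<close>, and it is extreme because \<open>|\<phi>| = 1\<close>, every normalized positive
  definite function is bounded by \<open>1\<close>, and the quaternionic norm is strictly convex.

  Conversely, for an extreme \<open>\<phi>\<close> the positive definite functions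
  \<open>2\<phi>(x) \<plusminus> (\<phi>(x + a) + \<phi>(x - a))\<close> add up to \<open>4\<phi>\<close>, so each is a multiple of \<open>\<phi>\<close>; this is
  d'Alembert's equation \<open>\<phi>(x + a) + \<phi>(x - a) = 2 Re \<phi>(a) \<phi>(x)\<close>. Its real part \<open>r\<close> is a
  bounded solution of the scalar equation and behaves like a cosine: either \<open>|r| = 1\<close> and
  \<open>r\<close> is multiplicative, or \<open>r\<close> has a sine companion \<open>l\<close> with the addition formulas, and the
  vector part of \<open>\<phi>\<close> is \<open>l w\<close> for a pure quaternion \<open>w\<close> with \<open>|w| \<le> 1\<close>. For a unit pure \<open>u\<close>,
  \<open>r + l u\<close> is a character, and \<open>r + l w\<close> is a convex combination of \<open>r + l u\<close> and \<open>r - l u\<close>;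
  extremality forces it to be one of them.\<close>

lemma quat_of_real_sel [simp]:
  "qRe (of_real r) = r" "qI (of_real r) = 0" "qJ (of_real r) = 0" "qK (of_real r) = 0"
  by (simp_all add: of_real_def)

lemma quat_sum_sel [simp]:
  "qRe (sum f A) = (\<Sum>x\<in>A. qRe (f x))" "qI (sum f A) = (\<Sum>x\<in>A. qI (f x))"
  "qJ (sum f A) = (\<Sum>x\<in>A. qJ (f x))" "qK (sum f A) = (\<Sum>x\<in>A. qK (f x))"
  by (induction A rule: infinite_finite_induct; simp)+

lemma qcnj_sum: "qcnj (sum f A) = (\<Sum>x\<in>A. qcnj (f x))"
  by (simp add: quat_eq_iff sum_negf)

lemma qcnj_mult: "qcnj (a * b) = qcnj b * qcnj a"
  by (simp add: quat_eq_iff algebra_simps)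

lemma qcnj_scaleR: "qcnj (c *\<^sub>R x) = c *\<^sub>R qcnj x"
  by (simp add: quat_eq_iff)

lemma qcnj_one [simp]: "qcnj 1 = 1"
  by (simp add: quat_eq_iff)

definition qnorm_sq :: "quat \<Rightarrow> real" where
  "qnorm_sq q = (qRe q)\<^sup>2 + (qI q)\<^sup>2 + (qJ q)\<^sup>2 + (qK q)\<^sup>2"

lemma qnorm_sq_nonneg: "qnorm_sq q \<ge> 0"
  by (simp add: qnorm_sq_def)

lemma qnorm_sq_eq_0_iff: "qnorm_sq q = 0 \<longleftrightarrow> q = 0"
  by (auto simp: qnorm_sq_def quat_eq_iff add_nonneg_eq_0_iff)

lemma qcnj_mult_self: "qcnj q * q = of_real (qnorm_sq q)" "q * qcnj q = of_real (qnorm_sq q)"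
  by (simp_all add: quat_eq_iff qnorm_sq_def power2_eq_square algebra_simps)

lemma unit_quats_iff: "q \<in> unit_quats \<longleftrightarrow> qnorm_sq q = 1"
  unfolding unit_quats_def qnorm_def qnorm_sq_def by auto

lemma qnorm_sq_convex_combination:
  "qnorm_sq ((1 - u) *\<^sub>R a + u *\<^sub>R b)
     = (1 - u) * qnorm_sq a + u * qnorm_sq b - u * (1 - u) * qnorm_sq (a - b)"
  by (simp add: qnorm_sq_def power2_eq_square algebra_simps)

lemma qnorm_sq_real_plus_pure:
  assumes "qRe w = 0"
  shows "qnorm_sq (of_real a + c *\<^sub>R w) = a\<^sup>2 + c\<^sup>2 * qnorm_sq w"
  using assms by (simp add: qnorm_sq_def algebra_simps)

lemma pure_quat_square:
  assumes "qRe u = 0"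
  shows "u * u = - of_real (qnorm_sq u)"
  using assms by (simp add: quat_eq_iff qnorm_sq_def power2_eq_square)

lemma pure_quat_polar:
  assumes "qRe w = 0"
  obtains u where "qRe u = 0" "qnorm_sq u = 1" "w = sqrt (qnorm_sq w) *\<^sub>R u"
proof (cases "w = 0")
  case True
  then show ?thesis
    by (intro that[of "Quat 0 1 0 0"]) (simp_all add: qnorm_sq_def)
next
  case False
  define n where "n = sqrt (qnorm_sq w)"
  have "n > 0"
    using False qnorm_sq_nonneg[of w] by (simp add: n_def qnorm_sq_eq_0_iff order_less_le)
  moreover have "n\<^sup>2 = qnorm_sq w"
    by (simp add: n_def qnorm_sq_nonneg)
  moreover have "qnorm_sq ((1 / n) *\<^sub>R w) = qnorm_sq w / n\<^sup>2"
    by (simp add: qnorm_sq_def power_mult_distrib power_divide add_divide_distrib)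
  ultimately show ?thesis
    using assms False by (intro that[of "(1 / n) *\<^sub>R w"]) (simp_all add: n_def[symmetric] qnorm_sq_eq_0_iff)
qed

subsection \<open>Positive definite functions\<close>

definition quat_pd_sum :: "('g::ab_group_add \<Rightarrow> quat) \<Rightarrow> nat \<Rightarrow> (nat \<Rightarrow> 'g) \<Rightarrow> (nat \<Rightarrow> quat) \<Rightarrow> quat"
  where "quat_pd_sum \<phi> k g q = (\<Sum>i<k. \<Sum>j<k. qcnj (q i) * \<phi> (g j - g i) * q j)"

lemma nonneg_real_quat_iff:
  "(\<exists>r\<ge>0. x = of_real r) \<longleftrightarrow> qRe x \<ge> 0 \<and> qI x = 0 \<and> qJ x = 0 \<and> qK x = 0"
  by (auto simp: quat_eq_iff intro!: exI[of _ "qRe x"])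

lemma quat_pos_def_iff:
  "quat_pos_def \<phi> \<longleftrightarrow> (\<forall>k g q. \<exists>r\<ge>0. quat_pd_sum \<phi> k g q = of_real r)"
  unfolding quat_pos_def_def quat_pd_sum_def ..

lemma quat_pos_def_two_points:
  assumes "quat_pos_def \<phi>"
  shows "\<exists>r\<ge>0. \<phi> 0 + \<phi> x * q + qcnj q * \<phi> (-x) + qcnj q * \<phi> 0 * q = of_real r"
proof -
  obtain r where "r \<ge> 0"
    and "quat_pd_sum \<phi> 2 (\<lambda>i. if i = 0 then 0 else x) (\<lambda>i. if i = 0 then 1 else q) = of_real r"
    using assms unfolding quat_pos_def_iff by blast
  then show ?thesis
    by (auto simp: quat_pd_sum_def numeral_2_eq_2 lessThan_Suc algebra_simps)
qed

lemma quat_pos_def_at_zero: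
  assumes "quat_pos_def \<phi>"
  shows "\<phi> 0 = of_real (qRe (\<phi> 0))" "qRe (\<phi> 0) \<ge> 0"
proof -
  obtain r where "r \<ge> 0" "quat_pd_sum \<phi> 1 (\<lambda>_. 0) (\<lambda>_. 1) = of_real r"
    using assms unfolding quat_pos_def_iff by blast
  then show "\<phi> 0 = of_real (qRe (\<phi> 0))" "qRe (\<phi> 0) \<ge> 0"
    by (auto simp: quat_pd_sum_def quat_eq_iff)
qed

text \<open>Testing the two-point condition with \<open>q = 1\<close> and \<open>q = i\<close> gives the hermitian symmetry.\<close>

lemma quat_pos_def_minus:
  assumes "quat_pos_def \<phi>"
  shows "\<phi> (-x) = qcnj (\<phi> x)"
proof -
  have "\<phi> 0 = of_real (qRe (\<phi> 0))"
    by (rule quat_pos_def_at_zero[OF assms])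
  moreover note quat_pos_def_two_points[OF assms, of x 1]
    quat_pos_def_two_points[OF assms, of x "Quat 0 1 0 0"]
  ultimately show ?thesis
    unfolding nonneg_real_quat_iff by (auto simp: quat_eq_iff)
qed

lemma quat_pos_def_norm_bound:
  assumes "quat_pos_def \<phi>"
  shows "2 * qnorm_sq (\<phi> x) \<le> qRe (\<phi> 0) * (1 + qnorm_sq (\<phi> x))"
proof -
  define a where "a = \<phi> x"
  define c where "c = qRe (\<phi> 0)"
  have "\<phi> 0 = of_real c" "\<phi> (-x) = qcnj a"
    using quat_pos_def_at_zero[OF assms] quat_pos_def_minus[OF assms] by (simp_all add: a_def c_def)
  moreover obtain r where "r \<ge> 0"
    "\<phi> 0 + \<phi> x * - qcnj a + qcnj (- qcnj a) * \<phi> (-x) + qcnj (- qcnj a) * \<phi> 0 * - qcnj a = of_real r"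
    using quat_pos_def_two_points[OF assms] by blast
  ultimately show ?thesis
    by (simp add: quat_eq_iff a_def[symmetric] c_def[symmetric] qnorm_sq_def power2_eq_square algebra_simps)
qed

lemma normalized_pos_def_norm_le_1:
  assumes "\<phi> \<in> quat_pos_def_normalized"
  shows "qnorm_sq (\<phi> x) \<le> 1"
  using assms quat_pos_def_norm_bound[of \<phi> x] by (simp add: quat_pos_def_normalized_def)

lemma quat_pos_def_eq_0:
  assumes "quat_pos_def \<phi>" "qRe (\<phi> 0) = 0"
  shows "\<phi> = 0"
proof
  fix x
  have "qnorm_sq (\<phi> x) = 0"
    using quat_pos_def_norm_bound[OF assms(1), of x] assms(2) qnorm_sq_nonneg[of "\<phi> x"] by simp
  then show "\<phi> x = 0 x"
    by (simp add: qnorm_sq_eq_0_iff)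
qed

lemma quat_pos_def_scaleR:
  assumes "quat_pos_def \<phi>" "c \<ge> 0"
  shows "quat_pos_def (c *\<^sub>R \<phi>)"
proof -
  have "quat_pd_sum (c *\<^sub>R \<phi>) k g q = c *\<^sub>R quat_pd_sum \<phi> k g q" for k g q
    by (simp add: quat_pd_sum_def scaleR_fun_def scaleR_sum_right)
  then show ?thesis
    using assms unfolding quat_pos_def_iff
    by (metis mult_nonneg_nonneg of_real_mult scaleR_conv_of_real)
qed

lemma sum_lessThan_double: "(\<Sum>i<2 * (k::nat). h i) = (\<Sum>i<k. h (2 * i) + h (2 * i + 1))"
  by (induction k) (simp_all add: algebra_simps)

text \<open>Doubling each test point \<open>g i\<close> to \<open>g i, g i + a\<close> with weights \<open>q i, c q i\<close>.\<close>

lemma quat_pos_def_translate_combination: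
  assumes "quat_pos_def \<phi>"
  shows "quat_pos_def (\<lambda>x. (1 + c\<^sup>2) *\<^sub>R \<phi> x + c *\<^sub>R (\<phi> (x + a) + \<phi> (x - a)))"
    (is "quat_pos_def ?\<psi>")
proof -
  have "quat_pd_sum ?\<psi> k g q = quat_pd_sum \<phi> (2 * k) (\<lambda>i. g (i div 2) + (if even i then 0 else a))
           (\<lambda>i. if even i then q (i div 2) else c *\<^sub>R q (i div 2))" for k g q
  proof -
    have "qcnj (q i) * ?\<psi> (g j - g i) * q j
        = (qcnj (q i) * \<phi> (g j - g i) * q j + qcnj (q i) * \<phi> ((g j + a) - g i) * (c *\<^sub>R q j))
          + (qcnj (c *\<^sub>R q i) * \<phi> (g j - (g i + a)) * q j
             + qcnj (c *\<^sub>R q i) * \<phi> ((g j + a) - (g i + a)) * (c *\<^sub>R q j))" for i j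
    proof -
      have "(g j + a) - g i = (g j - g i) + a" "g j - (g i + a) = (g j - g i) - a"
        "(g j + a) - (g i + a) = g j - g i"
        by (simp_all add: algebra_simps)
      then show ?thesis
        by (simp add: qcnj_scaleR algebra_simps power2_eq_square)
    qed
    then show ?thesis
      unfolding quat_pd_sum_def sum_lessThan_double by (simp add: sum.distrib)
  qed
  then show ?thesis
    using assms unfolding quat_pos_def_iff by presburger
qed

lemma quat_dual_zero_minus:
  assumes "\<phi> \<in> quat_dual"
  shows "\<phi> 0 = 1" "\<phi> (-x) = qcnj (\<phi> x)"
proof -
  have unit: "qcnj (\<phi> y) * \<phi> y = 1" "\<phi> y * qcnj (\<phi> y) = 1" for y
    using assms by (auto simp: quat_dual_def unit_quats_iff qcnj_mult_self)
  have hom: "\<phi> (x + y) = \<phi> x * \<phi> y" for x y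
    using assms by (auto simp: quat_dual_def)
  have "1 = qcnj (\<phi> 0) * (\<phi> 0 * \<phi> 0)"
    using hom[of 0 0] unit(1)[of 0] by simp
  also have "\<dots> = \<phi> 0"
    using unit(1)[of 0] by (simp flip: mult.assoc)
  finally show zero: "\<phi> 0 = 1" by simp
  have "\<phi> (-x) = \<phi> (-x) * (\<phi> x * qcnj (\<phi> x))"
    using unit(2)[of x] by simp
  also have "\<dots> = \<phi> (-x + x) * qcnj (\<phi> x)"
    by (simp only: hom mult.assoc)
  finally show "\<phi> (-x) = qcnj (\<phi> x)"
    using zero by simp
qed

lemma quat_dual_normalized_pos_def:
  assumes "\<phi> \<in> quat_dual"
  shows "\<phi> \<in> quat_pos_def_normalized"
proof -
  have hom: "\<phi> (x + y) = \<phi> x * \<phi> y" for x y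
    using assms by (auto simp: quat_dual_def)
  have "quat_pd_sum \<phi> k g q = of_real (qnorm_sq (\<Sum>j<k. \<phi> (g j) * q j))" for k g q
  proof -
    have "qcnj (q i) * \<phi> (g j - g i) * q j = qcnj (\<phi> (g i) * q i) * (\<phi> (g j) * q j)" for i j
      using hom[of "- g i" "g j"] quat_dual_zero_minus(2)[OF assms, of "g i"]
      by (simp add: qcnj_mult mult.assoc)
    then show ?thesis
      by (simp add: quat_pd_sum_def qcnj_sum sum_product flip: qcnj_mult_self)
  qed
  then show ?thesis
    using quat_dual_zero_minus(1)[OF assms] qnorm_sq_nonneg
    by (auto simp: quat_pos_def_normalized_def quat_pos_def_iff)
qed

lemma quat_dual_extreme_point:
  assumes "\<phi> \<in> quat_dual"
  shows "\<phi> extreme_point_of quat_pos_def_normalized"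
  unfolding extreme_point_of_def
proof (intro conjI ballI notI)
  show "\<phi> \<in> quat_pos_def_normalized"
    using assms by (rule quat_dual_normalized_pos_def)
  fix a b
  assume a: "a \<in> quat_pos_def_normalized" and b: "b \<in> quat_pos_def_normalized"
    and "\<phi> \<in> open_segment a b"
  then obtain u where "a \<noteq> b" "0 < u" "u < 1" and \<phi>: "\<phi> = (1 - u) *\<^sub>R a + u *\<^sub>R b"
    unfolding in_segment by blast
  have "a x = b x" for x
  proof -
    have "1 = qnorm_sq (\<phi> x)"
      using assms by (simp add: quat_dual_def unit_quats_iff)
    also have "\<dots> = (1 - u) * qnorm_sq (a x) + u * qnorm_sq (b x) - u * (1 - u) * qnorm_sq (a x - b x)"
      by (simp add: \<phi> scaleR_fun_def qnorm_sq_convex_combination)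
    also have "\<dots> \<le> 1 - u * (1 - u) * qnorm_sq (a x - b x)"
      using \<open>0 < u\<close> \<open>u < 1\<close> convex_bound_le[OF normalized_pos_def_norm_le_1[OF a, of x]
        normalized_pos_def_norm_le_1[OF b, of x], of "1 - u" u] by simp
    finally have "u * (1 - u) * qnorm_sq (a x - b x) \<le> 0" by simp
    then have "qnorm_sq (a x - b x) = 0"
      using \<open>0 < u\<close> \<open>u < 1\<close> qnorm_sq_nonneg[of "a x - b x"]
      by (simp add: mult_le_0_iff)
    then show ?thesis
      by (simp add: qnorm_sq_eq_0_iff)
  qed
  with \<open>a \<noteq> b\<close> show False by auto
qed

lemma extreme_point_of_convex_combination:
  assumes "x extreme_point_of S" "y \<in> S" "z \<in> S" "0 < t" "t < 1" "x = t *\<^sub>R y + (1 - t) *\<^sub>R z"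
  shows "y = z"
proof (rule ccontr)
  assume "y \<noteq> z"
  then have "x \<in> open_segment z y"
    using assms(4-6) unfolding in_segment by (auto intro!: exI[of _ t] simp: add.commute)
  then show False
    using assms(1-3) by (auto simp: extreme_point_of_def)
qed

lemma extreme_pos_def_summand:
  assumes E: "\<phi> extreme_point_of quat_pos_def_normalized"
    and pd: "quat_pos_def \<psi>" "quat_pos_def \<theta>" and sum: "\<phi> = \<psi> + \<theta>"
  shows "\<psi> = qRe (\<psi> 0) *\<^sub>R \<phi>"
proof -
  define c d where "c = qRe (\<psi> 0)" and "d = qRe (\<theta> 0)"
  have \<phi>0: "\<phi> 0 = 1"
    using E by (simp add: extreme_point_of_def quat_pos_def_normalized_def)
  have "\<psi> 0 = of_real c" "\<theta> 0 = of_real d" "c \<ge> 0" "d \<ge> 0"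
    using quat_pos_def_at_zero[OF pd(1)] quat_pos_def_at_zero[OF pd(2)] by (simp_all add: c_def d_def)
  moreover have "\<phi> 0 = \<psi> 0 + \<theta> 0"
    by (simp add: sum)
  ultimately have cd: "c + d = 1"
    using \<phi>0 by (simp add: quat_eq_iff)
  consider "c = 0" | "d = 0" | "0 < c" "0 < d"
    using \<open>c \<ge> 0\<close> \<open>d \<ge> 0\<close> by linarith
  then show ?thesis
  proof cases
    case 1
    then show ?thesis
      using quat_pos_def_eq_0[OF pd(1)] by (simp add: c_def)
  next
    case 2
    then show ?thesis
      using quat_pos_def_eq_0[OF pd(2)] cd by (simp add: d_def c_def[symmetric] sum)
  next
    case 3
    have normalized: "(1 / c) *\<^sub>R \<psi> \<in> quat_pos_def_normalized" "(1 / d) *\<^sub>R \<theta> \<in> quat_pos_def_normalized"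
      using 3 \<open>\<psi> 0 = of_real c\<close> \<open>\<theta> 0 = of_real d\<close> quat_pos_def_scaleR[OF pd(1), of "1 / c"]
        quat_pos_def_scaleR[OF pd(2), of "1 / d"]
      by (simp_all add: quat_pos_def_normalized_def scaleR_fun_def quat_eq_iff)
    have "1 - c = d"
      using cd by simp
    then have "\<phi> = c *\<^sub>R ((1 / c) *\<^sub>R \<psi>) + (1 - c) *\<^sub>R ((1 / d) *\<^sub>R \<theta>)"
      using 3 by (simp add: sum)
    then have "(1 / c) *\<^sub>R \<psi> = (1 / d) *\<^sub>R \<theta>"
      using 3 cd by (intro extreme_point_of_convex_combination[OF E normalized]) auto
    then have "d *\<^sub>R ((1 / c) *\<^sub>R \<psi>) = d *\<^sub>R ((1 / d) *\<^sub>R \<theta>)"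
      by simp
    then have "\<theta> = (d / c) *\<^sub>R \<psi>"
      using 3 by simp
    then have "\<phi> = ((c + d) / c) *\<^sub>R \<psi>"
      using 3 by (simp add: sum add_divide_distrib scaleR_add_left)
    then show ?thesis
      using 3 cd by (simp add: c_def)
  qed
qed

lemma extreme_pos_def_dalembert:
  assumes E: "\<phi> extreme_point_of quat_pos_def_normalized"
  shows "\<phi> (x + a) + \<phi> (x - a) = (2 * qRe (\<phi> a)) *\<^sub>R \<phi> x"
proof -
  have pd: "quat_pos_def \<phi>" and \<phi>0: "\<phi> 0 = 1"
    using E by (auto simp: extreme_point_of_def quat_pos_def_normalized_def)
  define \<psi> where "\<psi> c = (1 / 4) *\<^sub>R (\<lambda>x. (1 + c\<^sup>2) *\<^sub>R \<phi> x + c *\<^sub>R (\<phi> (x + a) + \<phi> (x - a)))"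
    for c :: real
  have pd\<psi>: "quat_pos_def (\<psi> c)" for c
    unfolding \<psi>_def by (intro quat_pos_def_scaleR quat_pos_def_translate_combination pd) simp
  have "\<phi> = \<psi> 1 + \<psi> (-1)"
    by (simp add: \<psi>_def scaleR_fun_def fun_eq_iff quat_eq_iff field_simps)
  then have "\<psi> 1 = qRe (\<psi> 1 0) *\<^sub>R \<phi>"
    by (rule extreme_pos_def_summand[OF E pd\<psi> pd\<psi>])
  moreover have "qRe (\<psi> 1 0) = (1 + qRe (\<phi> a)) / 2"
    using \<phi>0 quat_pos_def_minus[OF pd, of a] by (simp add: \<psi>_def scaleR_fun_def)
  ultimately have "\<psi> 1 x = ((1 + qRe (\<phi> a)) / 2) *\<^sub>R \<phi> x"
    by (metis scaleR_fun_def)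
  then show ?thesis
    by (simp add: \<psi>_def scaleR_fun_def quat_eq_iff algebra_simps)
qed

subsection \<open>D'Alembert's functional equation\<close>

locale dalembert =
  fixes r :: "'g::ab_group_add \<Rightarrow> real"
  assumes dalembert: "r (x + a) + r (x - a) = 2 * r a * r x"
    and zero: "r 0 = 1"
begin

lemma dalembert_at: "u = x + a \<Longrightarrow> v = x - a \<Longrightarrow> r u + r v = 2 * r a * r x"
  using dalembert by simp

lemma cos_minus: "r (-x) = r x"
  using dalembert[of 0 x] zero by simp

lemma cos_double: "r (x + x) = 2 * (r x)\<^sup>2 - 1"
  using dalembert[of x x] zero by (simp add: power2_eq_square)

lemma unimodular_mult:
  assumes unimodular: "\<And>x. (r x)\<^sup>2 = 1"
  shows "r (x + y) = r x * r y"
proof -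
  define t where "t = r x * r y"
  have "t\<^sup>2 = 1"
    using unimodular[of x] unimodular[of y] by (simp add: t_def power_mult_distrib)
  have diff: "r (x - y) = 2 * t - r (x + y)"
    using dalembert[of x y] unfolding t_def by (simp add: algebra_simps)
  have "2 * (r (x + y) - t)\<^sup>2 = (r (x - y))\<^sup>2 + (r (x + y))\<^sup>2 - 2 * t\<^sup>2"
    unfolding diff by (simp add: power2_eq_square algebra_simps)
  then have "(r (x + y) - t)\<^sup>2 = 0"
    using unimodular[of "x + y"] unimodular[of "x - y"] \<open>t\<^sup>2 = 1\<close> by simp
  then show ?thesis
    by (simp add: t_def)
qed

lemma odd_companion_proportional:
  fixes p :: "'g \<Rightarrow> 'v::real_vector"
  assumes companion: "\<And>x a. p (x + a) + p (x - a) = (2 * r a) *\<^sub>R p x"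
    and odd: "\<And>x. p (-x) = - p x"
  shows "(r (b + b) - 1) *\<^sub>R p z = (r (z + b) - r (z - b)) *\<^sub>R p b"
proof -
  have plus: "p (z + (b + b)) - p z = (2 * r (z + b)) *\<^sub>R p b"
    using companion[of b "z + b"] odd[of z] by (simp add: algebra_simps)
  have minus: "p z - p (z - (b + b)) = (2 * r (z - b)) *\<^sub>R p b"
    using companion[of b "z - b"] odd[of "z - (b + b)"] by (simp add: algebra_simps)
  have "2 *\<^sub>R ((r (b + b) - 1) *\<^sub>R p z) = (2 * r (b + b)) *\<^sub>R p z - 2 *\<^sub>R p z"
    by (simp add: algebra_simps)
  also have "\<dots> = p (z + (b + b)) + p (z - (b + b)) - 2 *\<^sub>R p z"
    by (simp only: companion)
  also have "\<dots> = (p (z + (b + b)) - p z) - (p z - p (z - (b + b)))"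
    by (simp add: algebra_simps scaleR_2)
  also have "\<dots> = 2 *\<^sub>R ((r (z + b) - r (z - b)) *\<^sub>R p b)"
    unfolding plus minus by (simp add: algebra_simps)
  finally show ?thesis
    by (simp only: scaleR_cancel_left) simp
qed

text \<open>If \<open>r x = cos (\<theta> x)\<close> with \<open>\<theta>\<close> additive, then \<open>sine b x = sin (\<theta> x)\<close>, because
  \<open>cos (u - v) - cos (u + v) = 2 sin u sin v\<close>.\<close>

definition sine :: "'g \<Rightarrow> 'g \<Rightarrow> real"
  where "sine b x = (r (x - b) - r (x + b)) / (2 * sqrt (1 - (r b)\<^sup>2))"

context
  fixes b :: 'g
  assumes non_unimodular: "(r b)\<^sup>2 < 1"
begin

private lemma sine_scale:
  obtains c where "c > 0" "c\<^sup>2 = 1 - (r b)\<^sup>2" "\<And>x. 2 * c * sine b x = r (x - b) - r (x + b)"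
  using non_unimodular by (intro that[of "sqrt (1 - (r b)\<^sup>2)"]) (simp_all add: sine_def)

lemma sine_sq_add_cos_sq: "(sine b x)\<^sup>2 + (r x)\<^sup>2 = 1"
proof -
  obtain c where c: "c > 0" "c\<^sup>2 = 1 - (r b)\<^sup>2" "\<And>x. 2 * c * sine b x = r (x - b) - r (x + b)"
    using sine_scale by blast
  have sum: "r (x + b) + r (x - b) = 2 * r b * r x"
    by (rule dalembert)
  have prod: "r (x + x) + r (b + b) = 2 * r (x - b) * r (x + b)"
    by (rule dalembert_at) (simp_all add: algebra_simps)
  have "(2 * c)\<^sup>2 * (sine b x)\<^sup>2 = (r (x + b) + r (x - b))\<^sup>2 - 2 * (2 * r (x - b) * r (x + b))"
    unfolding power_mult_distrib[symmetric] c(3) by (simp add: power2_eq_square algebra_simps)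
  also have "\<dots> = (2 * c)\<^sup>2 * (1 - (r x)\<^sup>2)"
    unfolding sum prod[symmetric] cos_double power_mult_distrib c(2) by (simp add: power2_eq_square algebra_simps)
  finally show ?thesis
    using c(1) by simp
qed

lemma sine_mult: "sine b x * sine b y = (r (x - y) - r (x + y)) / 2"
proof -
  obtain c where c: "c > 0" "c\<^sup>2 = 1 - (r b)\<^sup>2" "\<And>x. 2 * c * sine b x = r (x - b) - r (x + b)"
    using sine_scale by blast
  have "r ((x + y) - (b + b)) + r (x - y) = 2 * r (y - b) * r (x - b)"
    "r (x + y) + r ((x - y) - (b + b)) = 2 * r (y + b) * r (x - b)"
    "r (x + y) + r ((x - y) + (b + b)) = 2 * r (y - b) * r (x + b)"
    "r ((x + y) + (b + b)) + r (x - y) = 2 * r (y + b) * r (x + b)"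
    by (rule dalembert_at; simp add: algebra_simps)+
  moreover have "r ((x + y) + (b + b)) + r ((x + y) - (b + b)) = 2 * r (b + b) * r (x + y)"
    "r ((x - y) + (b + b)) + r ((x - y) - (b + b)) = 2 * r (b + b) * r (x - y)"
    by (rule dalembert)+
  ultimately have "(2 * c * sine b x) * (2 * c * sine b y) = (1 - r (b + b)) * (r (x - y) - r (x + y))"
    unfolding c(3) by (simp add: algebra_simps)
  also have "\<dots> = 2 * c\<^sup>2 * (r (x - y) - r (x + y))"
    unfolding cos_double c(2) by (simp add: algebra_simps)
  finally have "(2 * c\<^sup>2) * (2 * (sine b x * sine b y)) = (2 * c\<^sup>2) * (r (x - y) - r (x + y))"
    by (simp add: power2_eq_square algebra_simps)
  then show ?thesis
    using c(1) by simp
qed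

lemma cos_add: "r (x + y) = r x * r y - sine b x * sine b y"
  using dalembert[of x y] unfolding sine_mult by (simp add: field_simps)

lemma sine_add: "sine b (x + y) = r x * sine b y + sine b x * r y"
proof -
  obtain c where c: "c > 0" "\<And>x. 2 * c * sine b x = r (x - b) - r (x + b)"
    using sine_scale by blast
  have "r ((x + y) - b) + r ((x + b) - y) = 2 * r x * r (y - b)"
    using dalembert[of "y - b" x] cos_minus[of "(y - b) - x"] by (simp add: algebra_simps)
  moreover have "r ((x + y) + b) + r ((x - b) - y) = 2 * r x * r (y + b)"
    using dalembert[of "y + b" x] cos_minus[of "(y + b) - x"] by (simp add: algebra_simps)
  moreover have "r ((x + y) - b) + r ((x - b) - y) = 2 * r y * r (x - b)"
    "r ((x + y) + b) + r ((x + b) - y) = 2 * r y * r (x + b)"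
    by (rule dalembert_at; simp add: algebra_simps)+
  ultimately have "2 * c * sine b (x + y) = r x * (2 * c * sine b y) + r y * (2 * c * sine b x)"
    unfolding c(2) by (simp add: algebra_simps)
  also have "\<dots> = 2 * c * (r x * sine b y + sine b x * r y)"
    by (simp add: algebra_simps)
  finally show ?thesis
    using c(1) by simp
qed

lemma sine_self_pos: "sine b b > 0"
proof -
  obtain c where c: "c > 0" "c\<^sup>2 = 1 - (r b)\<^sup>2" "\<And>x. 2 * c * sine b x = r (x - b) - r (x + b)"
    using sine_scale by blast
  have "2 * c * sine b b = 1 - (2 * (r b)\<^sup>2 - 1)"
    using c(3)[of b] by (simp add: zero cos_double)
  also have "\<dots> = 2 * c * c"
    using c(2) by (simp add: power2_eq_square algebra_simps)
  finally have "2 * c * sine b b = 2 * c * c" .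
  then show ?thesis
    using c(1) by simp
qed

lemma odd_companion_eq_sine_scaleR:
  fixes p :: "'g \<Rightarrow> 'v::real_vector"
  assumes "\<And>x a. p (x + a) + p (x - a) = (2 * r a) *\<^sub>R p x" and "\<And>x. p (-x) = - p x"
  obtains w where "\<And>z. p z = sine b z *\<^sub>R w"
proof -
  obtain c where c: "c > 0" "c\<^sup>2 = 1 - (r b)\<^sup>2" "\<And>x. 2 * c * sine b x = r (x - b) - r (x + b)"
    using sine_scale by blast
  have "p z = sine b z *\<^sub>R ((1 / c) *\<^sub>R p b)" for z
  proof -
    have "r (b + b) - 1 = - 2 * c\<^sup>2" "r (z + b) - r (z - b) = - 2 * c * sine b z"
      using c(3)[of z] by (simp_all add: cos_double c(2))
    then have "(- 2 * c\<^sup>2) *\<^sub>R p z = (- 2 * c\<^sup>2) *\<^sub>R (sine b z *\<^sub>R ((1 / c) *\<^sub>R p b))"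
      using odd_companion_proportional[where p = p, OF assms, of b z] c(1) by (simp add: power2_eq_square)
    then show ?thesis
      using c(1) by (simp only: scaleR_cancel_left) simp
  qed
  then show ?thesis
    by (rule that)
qed

end

end

lemma mult_of_real_plus_scaleR:
  fixes u :: "'a::real_algebra_1"
  assumes "u * u = -1"
  shows "(of_real a + b *\<^sub>R u) * (of_real c + d *\<^sub>R u) = of_real (a * c - b * d) + (a * d + b * c) *\<^sub>R u"
proof -
  have "(of_real a + b *\<^sub>R u) * (of_real c + d *\<^sub>R u)
      = (a * c) *\<^sub>R 1 + (a * d + b * c) *\<^sub>R u + (b * d) *\<^sub>R (u * u)"
    by (simp add: of_real_def algebra_simps)
  then show ?thesis
    using assms by (simp add: of_real_def algebra_simps)
qed

lemma cos_sin_quat_dual: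
  fixes r l :: "'g::ab_group_add \<Rightarrow> real"
  assumes u: "qRe u = 0" "qnorm_sq u = 1"
    and pythagoras: "\<And>x. (l x)\<^sup>2 + (r x)\<^sup>2 = 1"
    and cos_add: "\<And>x y. r (x + y) = r x * r y - l x * l y"
    and sin_add: "\<And>x y. l (x + y) = r x * l y + l x * r y"
  shows "(\<lambda>z. of_real (r z) + l z *\<^sub>R u) \<in> quat_dual"
proof -
  have "u * u = -1"
    using pure_quat_square[OF u(1)] u(2) by simp
  then show ?thesis
    using u pythagoras
    by (simp add: quat_dual_def unit_quats_iff qnorm_sq_real_plus_pure mult_of_real_plus_scaleR
        cos_add sin_add add.commute mult.commute)
qed

lemma (in dalembert) bounded_odd_companion_decomposition:
  fixes v :: "'g \<Rightarrow> quat"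
  assumes companion: "\<And>x a. v (x + a) + v (x - a) = (2 * r a) *\<^sub>R v x"
    and odd: "\<And>x. v (-x) = - v x" and pure: "\<And>z. qRe (v z) = 0"
    and bound: "\<And>z. (r z)\<^sup>2 + qnorm_sq (v z) \<le> 1"
  obtains l w where "\<And>z. v z = l z *\<^sub>R w" "qRe w = 0" "qnorm_sq w \<le> 1"
    "\<And>x. (l x)\<^sup>2 + (r x)\<^sup>2 = 1"
    "\<And>x y. r (x + y) = r x * r y - l x * l y" "\<And>x y. l (x + y) = r x * l y + l x * r y"
proof (cases "\<forall>x. (r x)\<^sup>2 = 1")
  case True
  then have "v z = 0" for z
    using bound[of z] qnorm_sq_nonneg[of "v z"] by (simp add: qnorm_sq_eq_0_iff)
  with True show ?thesis
    by (intro that[of "\<lambda>_. 0" 0]) (simp_all add: unimodular_mult qnorm_sq_def)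
next
  case False
  then obtain b where "(r b)\<^sup>2 \<noteq> 1"
    by blast
  moreover have "(r b)\<^sup>2 \<le> 1"
    using bound[of b] qnorm_sq_nonneg[of "v b"] by linarith
  ultimately have b: "(r b)\<^sup>2 < 1"
    by simp
  obtain w where w: "\<And>z. v z = sine b z *\<^sub>R w"
    using odd_companion_eq_sine_scaleR[where p = v, OF b companion odd] by blast
  have "qRe w = 0"
    using pure[of b] sine_self_pos[OF b] by (simp add: w)
  moreover have "(sine b b)\<^sup>2 * qnorm_sq w \<le> (sine b b)\<^sup>2"
    using bound[of b] sine_sq_add_cos_sq[OF b, of b] qnorm_sq_real_plus_pure[OF \<open>qRe w = 0\<close>, of 0]
    by (simp add: w)
  then have "qnorm_sq w \<le> 1"
    using sine_self_pos[OF b] by simp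
  ultimately show ?thesis
    using sine_sq_add_cos_sq[OF b] cos_add[OF b] sine_add[OF b]
    by (intro that[of "sine b" w]) (simp_all add: w)
qed

lemma extreme_point_cos_sin_form:
  assumes E: "\<phi> extreme_point_of quat_pos_def_normalized"
  obtains r l :: "'g::ab_group_add \<Rightarrow> real" and w
  where "\<And>z. \<phi> z = of_real (r z) + l z *\<^sub>R w" "qRe w = 0" "qnorm_sq w \<le> 1"
    "\<And>x. (l x)\<^sup>2 + (r x)\<^sup>2 = 1"
    "\<And>x y. r (x + y) = r x * r y - l x * l y" "\<And>x y. l (x + y) = r x * l y + l x * r y"
proof -
  have pd: "quat_pos_def \<phi>" and normalized: "\<phi> \<in> quat_pos_def_normalized"
    using E by (auto simp: extreme_point_of_def quat_pos_def_normalized_def)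
  define r where "r x = qRe (\<phi> x)" for x
  define v where "v x = \<phi> x - of_real (r x)" for x
  have \<phi>: "\<phi> z = of_real (r z) + v z" and pure: "qRe (v z) = 0" for z
    by (simp_all add: v_def r_def)
  have D: "\<phi> (x + a) + \<phi> (x - a) = (2 * r a) *\<^sub>R \<phi> x" for x a
    unfolding r_def by (rule extreme_pos_def_dalembert[OF E])
  have "r (x + a) + r (x - a) = 2 * r a * r x" for x a
    using arg_cong[where f = qRe, OF D[of x a]] by (simp add: r_def)
  moreover have "r 0 = 1"
    using normalized by (simp add: r_def quat_pos_def_normalized_def)
  ultimately interpret dalembert r
    by unfold_locales
  have "v (x + a) + v (x - a) = (2 * r a) *\<^sub>R v x" for x a
    using D[of x a] dalembert[of x a] by (simp add: v_def quat_eq_iff algebra_simps)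
  moreover have "v (-x) = - v x" for x
    using quat_pos_def_minus[OF pd, of x] by (simp add: v_def r_def quat_eq_iff)
  moreover have "(r z)\<^sup>2 + qnorm_sq (v z) \<le> 1" for z
    using normalized_pos_def_norm_le_1[OF normalized, of z] qnorm_sq_real_plus_pure[OF pure, of "r z" 1]
    by (simp add: \<phi>)
  ultimately obtain l w where "\<And>z. v z = l z *\<^sub>R w" "qRe w = 0" "qnorm_sq w \<le> 1"
    "\<And>x. (l x)\<^sup>2 + (r x)\<^sup>2 = 1"
    "\<And>x y. r (x + y) = r x * r y - l x * l y" "\<And>x y. l (x + y) = r x * l y + l x * r y"
    using bounded_odd_companion_decomposition pure by metis
  then show ?thesis
    by (intro that[of r l w]) (simp_all add: \<phi>)
qed

text \<open>Writing \<open>w = n u\<close> with \<open>u\<close> a unit pure quaternion and \<open>\<theta>\<^sub>u = r + l u\<close>, the function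
  \<open>r + l w\<close> equals \<open>(1 + n)/2 \<theta>\<^sub>u + (1 - n)/2 \<theta>\<^sub>-\<^sub>u\<close>, a proper convex combination of two
  characters unless \<open>n = 1\<close>.\<close>

lemma extreme_point_cos_sin_in_quat_dual:
  fixes r l :: "'g::ab_group_add \<Rightarrow> real"
  assumes E: "\<phi> extreme_point_of quat_pos_def_normalized"
    and \<phi>: "\<And>z. \<phi> z = of_real (r z) + l z *\<^sub>R w" and w: "qRe w = 0" "qnorm_sq w \<le> 1"
    and pythagoras: "\<And>x. (l x)\<^sup>2 + (r x)\<^sup>2 = 1"
    and cos_add: "\<And>x y. r (x + y) = r x * r y - l x * l y"
    and sin_add: "\<And>x y. l (x + y) = r x * l y + l x * r y"
  shows "\<phi> \<in> quat_dual"
proof -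
  define n where "n = sqrt (qnorm_sq w)"
  obtain u where u: "qRe u = 0" "qnorm_sq u = 1" and wu: "w = n *\<^sub>R u"
    using pure_quat_polar[OF w(1)] unfolding n_def by blast
  define \<theta> where "\<theta> v z = of_real (r z) + l z *\<^sub>R v" for v :: quat and z
  have dual: "\<theta> v \<in> quat_dual" if "qRe v = 0" "qnorm_sq v = 1" for v
    unfolding \<theta>_def using that pythagoras cos_add sin_add by (rule cos_sin_quat_dual)
  have "\<phi> = \<theta> u"
  proof (cases "n = 1")
    case True
    then show ?thesis
      by (simp add: fun_eq_iff \<phi> \<theta>_def wu)
  next
    case False
    then have n: "0 \<le> n" "n < 1"
      using w(2) qnorm_sq_nonneg[of w] by (simp_all add: n_def)
    have "\<theta> u = \<theta> (- u)"
    proof (rule extreme_point_of_convex_combination[OF E])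
      show "\<theta> u \<in> quat_pos_def_normalized" "\<theta> (- u) \<in> quat_pos_def_normalized"
        using u by (auto intro!: quat_dual_normalized_pos_def dual simp: qnorm_sq_def)
      show "0 < (1 + n) / 2" "(1 + n) / 2 < 1"
        using n by simp_all
      show "\<phi> = ((1 + n) / 2) *\<^sub>R \<theta> u + (1 - (1 + n) / 2) *\<^sub>R \<theta> (- u)"
        by (simp add: fun_eq_iff \<phi> \<theta>_def wu scaleR_fun_def quat_eq_iff algebra_simps)
    qed
    then have opposite: "l z *\<^sub>R u = - (l z *\<^sub>R u)" for z
      by (simp add: fun_eq_iff \<theta>_def)
    have "u \<noteq> 0"
      using u(2) by (auto simp: qnorm_sq_def)
    then have vanish: "l z = 0" for z
      using opposite[of z] by (auto simp: quat_eq_iff)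
    then show ?thesis
      by (simp add: fun_eq_iff \<phi> \<theta>_def vanish)
  qed
  then show ?thesis
    using dual[OF u] by simp
qed

lemma extreme_point_in_quat_dual:
  assumes "\<phi> extreme_point_of quat_pos_def_normalized"
  shows "\<phi> \<in> quat_dual"
  using assms by (rule extreme_point_cos_sin_form) (rule extreme_point_cos_sin_in_quat_dual[OF assms])

theorem mainTheorem11:
  fixes \<phi> :: "'g::ab_group_add \<Rightarrow> quat"
  shows "\<phi> extreme_point_of (quat_pos_def_normalized :: ('g \<Rightarrow> quat) set) \<longleftrightarrow> \<phi> \<in> quat_dual"
  using extreme_point_in_quat_dual quat_dual_extreme_point by blast

end
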